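(* Consider a radial three-phase distribution grid on buses $\{0,\ldots,N\}$ (feeder bus $0$, each bus $n\geq1$ with parent $\pi_n<n$, line $n$ joining $\pi_n$ and $n$), with symmetric phase impedance matrices $\mathbf{Z}_n=\mathbf{Z}_n^{\top}\in\mathbb{C}^{3\times3}$, $n=1,\ldots,N$. Let $\tilde{\mathbf{Z}}_n:=\operatorname{diag}(\boldsymbol{\alpha}^* )\mathbf{Z}_n\operatorname{diag}(\boldsymbol{\alpha})$ with $\boldsymbol{\alpha}:=[1~\alpha~\alpha^2]^{\top}$, $\alpha=e^{-j2\pi/3}$, and $\mathbf{X}:=2\mathbf{M}\,\mathrm{bdiag}(\{\mathrm{Im}[\tilde{\mathbf{Z}}_n]\})\mathbf{M}^{\top}$ with $\mathbf{M}:=\mathbf{T}(\mathbf{I}_3\otimes\mathbf{F})\mathbf{T}^{\top}$. If $\mathrm{Im}[\mathbf{Z}_n]$ is strictly diagonally dominant with positive diagonal entries for all $n$, then $\mathbf{X}\succeq\mathbf{0}$.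
   Context: The full branch-bus incidence matrix $\tilde{\mathbf{A}}=[\mathbf{a}_0~\mathbf{A}]\in\mathbb{R}^{N\times(N+1)}$ has in row $n$ entry $+1$ at column $\pi_n$, $-1$ at column $n$, zeros elsewhere; $\mathbf{A}$ is the reduced incidence matrix (column of bus $0$ removed) and $\mathbf{F}:=-\mathbf{A}^{-1}$. $\mathrm{bdiag}(\{\mathbf{Y}_n\})$ is block diagonal with blocks $\mathbf{Y}_1,\ldots,\mathbf{Y}_N$. $\mathbf{T}:=[\mathbf{I}_3\otimes\mathbf{e}_1^{\top};\ldots;\mathbf{I}_3\otimes\mathbf{e}_N^{\top}]\in\mathbb{R}^{3N\times3N}$ (blocks stacked vertically), with $\mathbf{e}_n$ the $n$-th column of $\mathbf{I}_N$. $^*$ is entrywise conjugation, $\mathrm{Im}$ entrywise imaginary part. For a non-symmetric real matrix $\mathbf{Y}$, $\mathbf{Y}\succeq\mathbf{0}$ means $\mathbf{u}^{\top}\mathbf{Y}\mathbf{u}\geq0$ for all real $\mathbf{u}$. *)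

theory Defs
  imports Complex_Main "Jordan_Normal_Form.Gauss_Jordan_Elimination"
begin

text \<open>Matrices are Jordan_Normal_Form matrices (0-based indices).
Buses are 0..N, lines/non-feeder buses 1..N; parent function par with par n < n.
Row i (0-based) of the reduced incidence matrix corresponds to line i+1,
column j (0-based) to bus j+1.\<close>

definition reduced_incidence :: "nat \<Rightarrow> (nat \<Rightarrow> nat) \<Rightarrow> real mat" where
  "reduced_incidence N par = mat N N (\<lambda>(i,j).
     (if j + 1 = par (i + 1) then 1 else 0) - (if j = i then 1 else 0))"

definition Fmat :: "nat \<Rightarrow> (nat \<Rightarrow> nat) \<Rightarrow> real mat" where
  "Fmat N par = - the (mat_inverse (reduced_incidence N par))"

definition kron :: "'a :: times mat \<Rightarrow> 'a mat \<Rightarrow> 'a mat" where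
  "kron A B = mat (dim_row A * dim_row B) (dim_col A * dim_col B)
     (\<lambda>(i,j). A $$ (i div dim_row B, j div dim_col B) * B $$ (i mod dim_row B, j mod dim_col B))"

text \<open>e_n^T as a 1 x N row matrix (n is 1-based as in the paper).\<close>
definition unit_row :: "nat \<Rightarrow> nat \<Rightarrow> real mat" where
  "unit_row N n = mat 1 N (\<lambda>(_,j). if j + 1 = n then 1 else 0)"

text \<open>T = [I_3 kron e_1^T; ...; I_3 kron e_N^T], blocks stacked vertically.\<close>
definition Tmat :: "nat \<Rightarrow> real mat" where
  "Tmat N = mat (3 * N) (3 * N) (\<lambda>(i,j). kron (1\<^sub>m 3) (unit_row N (i div 3 + 1)) $$ (i mod 3, j))"

definition bdiag3 :: "nat \<Rightarrow> (nat \<Rightarrow> 'a :: zero mat) \<Rightarrow> 'a mat" where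
  "bdiag3 N Y = mat (3 * N) (3 * N) (\<lambda>(i,j).
     if i div 3 = j div 3 then Y (i div 3 + 1) $$ (i mod 3, j mod 3) else 0)"

definition Mmat :: "nat \<Rightarrow> (nat \<Rightarrow> nat) \<Rightarrow> real mat" where
  "Mmat N par = Tmat N * kron (1\<^sub>m 3) (Fmat N par) * transpose_mat (Tmat N)"

definition alpha :: complex where "alpha = cis (- 2 * pi / 3)"

definition alpha_vec :: "complex vec" where
  "alpha_vec = vec 3 (\<lambda>k. alpha ^ k)"

definition diag_vec :: "complex vec \<Rightarrow> complex mat" where
  "diag_vec v = mat (dim_vec v) (dim_vec v) (\<lambda>(i,j). if i = j then v $ i else 0)"

definition Ztilde :: "complex mat \<Rightarrow> complex mat" where
  "Ztilde Z = diag_vec (map_vec cnj alpha_vec) * Z * diag_vec alpha_vec"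

definition Xmat :: "nat \<Rightarrow> (nat \<Rightarrow> nat) \<Rightarrow> (nat \<Rightarrow> complex mat) \<Rightarrow> real mat" where
  "Xmat N par Z = 2 \<cdot>\<^sub>m (Mmat N par * bdiag3 N (\<lambda>n. map_mat Im (Ztilde (Z n))) * transpose_mat (Mmat N par))"

definition strictly_diag_dominant :: "real mat \<Rightarrow> bool" where
  "strictly_diag_dominant A \<longleftrightarrow> (\<forall>k < dim_row A.
     \<bar>A $$ (k,k)\<bar> > (\<Sum>l \<in> {0..<dim_col A} - {k}. \<bar>A $$ (k,l)\<bar>))"

text \<open>Y \<succeq> 0 for a possibly non-symmetric real matrix: u^T Y u \<ge> 0 for all real u.\<close>
definition psd_real :: "real mat \<Rightarrow> bool" where
  "psd_real Y \<longleftrightarrow> (\<forall>u \<in> carrier_vec (dim_row Y). u \<bullet> (Y *\<^sub>v u) \<ge> 0)"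

end

theory Submission imports Defs begin

text \<open>\<open>Xmat\<close> is the congruence transform \<open>2 M B M\<^sup>T\<close> of the block diagonal matrix \<open>B\<close>
  with blocks \<open>Im Z\<^sub>n'\<close> (writing \<open>Z\<^sub>n'\<close> for \<open>Ztilde Z\<^sub>n\<close>), so it suffices that every block is
  positive semidefinite; neither the radial structure nor \<open>F\<close> plays any role.  The entries of
  \<open>Z\<^sub>n'\<close> are \<open>\<alpha>\<^sup>l\<^sup>-\<^sup>k (Z\<^sub>n)\<^sub>k\<^sub>l\<close>, and \<open>Re \<alpha>\<^sup>l\<^sup>-\<^sup>k\<close> is \<open>1\<close> on the diagonal and \<open>-1/2\<close> off it.  Hence
  the quadratic form of \<open>Im Z\<^sub>n'\<close> is that of the symmetric matrix with diagonal \<open>Im (Z\<^sub>n)\<^sub>k\<^sub>k\<close> and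
  off-diagonal entries \<open>-Im (Z\<^sub>n)\<^sub>k\<^sub>l / 2\<close>, plus an antisymmetric part (carrying \<open>Re Z\<^sub>n\<close>) that
  contributes nothing.  That symmetric matrix inherits diagonal dominance from \<open>Im Z\<^sub>n\<close>.\<close>

lemma quadratic_form_eq_double_sum:
  fixes A :: "'a :: comm_semiring_0 mat"
  assumes "A \<in> carrier_mat n n" "u \<in> carrier_vec n"
  shows "u \<bullet> (A *\<^sub>v u) = (\<Sum>i<n. \<Sum>j<n. u $ i * A $$ (i,j) * u $ j)"
  using assms
  by (simp add: scalar_prod_def mult_mat_vec_def row_def sum_distrib_left atLeast0LessThan ac_simps)

lemma psd_real_iff_double_sum:
  assumes "A \<in> carrier_mat n n"
  shows "psd_real A \<longleftrightarrow> (\<forall>x. 0 \<le> (\<Sum>i<n. \<Sum>j<n. x i * A $$ (i,j) * x j))"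
proof
  assume psd: "psd_real A"
  show "\<forall>x. 0 \<le> (\<Sum>i<n. \<Sum>j<n. x i * A $$ (i,j) * x j)"
  proof
    fix x :: "nat \<Rightarrow> real"
    have "0 \<le> vec n x \<bullet> (A *\<^sub>v vec n x)"
      using psd assms unfolding psd_real_def by auto
    then show "0 \<le> (\<Sum>i<n. \<Sum>j<n. x i * A $$ (i,j) * x j)"
      using assms by (simp add: quadratic_form_eq_double_sum)
  qed
next
  assume "\<forall>x. 0 \<le> (\<Sum>i<n. \<Sum>j<n. x i * A $$ (i,j) * x j)"
  then show "psd_real A"
    using assms unfolding psd_real_def by (auto simp: quadratic_form_eq_double_sum)
qed

lemma double_sum_antisymmetric_eq_0:
  fixes C :: "nat \<Rightarrow> nat \<Rightarrow> real"
  assumes "\<And>i j. i < n \<Longrightarrow> j < n \<Longrightarrow> C j i = - C i j"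
  shows "(\<Sum>i<n. \<Sum>j<n. x i * C i j * x j) = 0"
proof -
  have "(\<Sum>i<n. \<Sum>j<n. x i * C i j * x j) = (\<Sum>j<n. \<Sum>i<n. x i * C i j * x j)"
    by (rule sum.swap)
  also have "\<dots> = - (\<Sum>j<n. \<Sum>i<n. x j * C j i * x i)"
    unfolding sum_negf[symmetric]
  proof (intro sum.cong refl)
    fix j i assume "j \<in> {..<n}" "i \<in> {..<n}"
    then have "C j i = - C i j" using assms[of i j] by simp
    then show "x i * C i j * x j = - (x j * C j i * x i)" by simp
  qed
  finally show ?thesis by simp
qed

lemma neg_abs_mult_sum_squares_le:
  fixes a x y :: real
  shows "- (\<bar>a\<bar> * (x\<^sup>2 + y\<^sup>2)) \<le> 2 * (x * a * y)"
proof -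
  have "2 * \<bar>x * y\<bar> \<le> x\<^sup>2 + y\<^sup>2"
    using sum_squares_bound[of "\<bar>x\<bar>" "\<bar>y\<bar>"] by (simp add: abs_mult)
  then have "\<bar>a\<bar> * (2 * \<bar>x * y\<bar>) \<le> \<bar>a\<bar> * (x\<^sup>2 + y\<^sup>2)"
    by (rule mult_left_mono) simp
  moreover have "- (2 * (x * a * y)) \<le> \<bar>a\<bar> * (2 * \<bar>x * y\<bar>)"
    by (simp add: abs_mult[symmetric] ac_simps)
  ultimately show ?thesis by linarith
qed

lemma sum_split_diagonal:
  fixes f :: "nat \<Rightarrow> 'a :: comm_monoid_add"
  assumes "i < n"
  shows "(\<Sum>j<n. f j) = f i + (\<Sum>j<n. if j = i then 0 else f j)"
proof -
  have "(\<Sum>j<n. f j) = (\<Sum>j<n. (if j = i then f j else 0) + (if j = i then 0 else f j))"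
    by (rule sum.cong) auto
  then show ?thesis
    using assms by (simp add: sum.distrib)
qed

lemma sum_lessThan_if_eq_sum_diff:
  "(\<Sum>j<n::nat. if j = i then 0 else f j) = (\<Sum>j\<in>{0..<n} - {i}. f j :: 'a :: comm_monoid_add)"
  by (simp add: sum.If_cases lessThan_atLeast0 Diff_eq)

text \<open>Each off-diagonal term is absorbed by the two diagonal terms via
  \<open>2 x\<^sub>i a x\<^sub>j \<ge> -\<bar>a\<bar> (x\<^sub>i\<^sup>2 + x\<^sub>j\<^sup>2)\<close>.\<close>
lemma diag_dominant_double_sum_nonneg:
  fixes A :: "nat \<Rightarrow> nat \<Rightarrow> real"
  assumes sym: "\<And>i j. i < n \<Longrightarrow> j < n \<Longrightarrow> A j i = A i j"
    and dominant: "\<And>i. i < n \<Longrightarrow> (\<Sum>j\<in>{0..<n} - {i}. \<bar>A i j\<bar>) \<le> A i i"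
  shows "0 \<le> (\<Sum>i<n. \<Sum>j<n. x i * A i j * x j)"
proof -
  define off where "off i j = (if j = i then 0 else \<bar>A i j\<bar>)" for i j
  define cross where "cross = (\<Sum>i<n. \<Sum>j<n. if j = i then 0 else x i * A i j * x j)"
  have "(\<Sum>j<n. x i * A i j * x j) = A i i * (x i)\<^sup>2 + (\<Sum>j<n. if j = i then 0 else x i * A i j * x j)"
    if "i < n" for i
    using sum_split_diagonal[OF that, of "\<lambda>j. x i * A i j * x j"] by (simp add: power2_eq_square)
  then have split: "(\<Sum>i<n. \<Sum>j<n. x i * A i j * x j) = (\<Sum>i<n. A i i * (x i)\<^sup>2) + cross"
    unfolding cross_def by (simp add: sum.distrib[symmetric])
  have "- (\<Sum>i<n. \<Sum>j<n. off i j * ((x i)\<^sup>2 + (x j)\<^sup>2)) \<le> 2 * cross"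
    unfolding cross_def sum_distrib_left sum_negf[symmetric]
    by (intro sum_mono) (simp add: off_def neg_abs_mult_sum_squares_le)
  moreover have "(\<Sum>i<n. \<Sum>j<n. off i j * (x j)\<^sup>2) = (\<Sum>i<n. \<Sum>j<n. off i j * (x i)\<^sup>2)"
  proof -
    have "(\<Sum>i<n. \<Sum>j<n. off i j * (x j)\<^sup>2) = (\<Sum>j<n. \<Sum>i<n. off i j * (x j)\<^sup>2)"
      by (rule sum.swap)
    also have "\<dots> = (\<Sum>j<n. \<Sum>i<n. off j i * (x j)\<^sup>2)"
    proof (intro sum.cong refl)
      fix j i assume "j \<in> {..<n}" "i \<in> {..<n}"
      then have "off i j = off j i" using sym[of i j] by (simp add: off_def)
      then show "off i j * (x j)\<^sup>2 = off j i * (x j)\<^sup>2" by simp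
    qed
    finally show ?thesis .
  qed
  moreover have "(\<Sum>i<n. \<Sum>j<n. off i j * (x i)\<^sup>2) \<le> (\<Sum>i<n. A i i * (x i)\<^sup>2)"
    unfolding sum_distrib_right[symmetric]
    by (intro sum_mono mult_right_mono)
      (auto simp: off_def sum_lessThan_if_eq_sum_diff dominant)
  ultimately show ?thesis
    unfolding split by (simp add: distrib_left sum.distrib)
qed

lemma psd_real_congruence:
  assumes A: "A \<in> carrier_mat m m" and psd: "psd_real A"
    and M: "M \<in> carrier_mat n m" and c: "0 \<le> c"
  shows "psd_real (c \<cdot>\<^sub>m (M * A * transpose_mat M))"
  unfolding psd_real_def
proof (intro ballI)
  fix u :: "real vec" assume u: "u \<in> carrier_vec (dim_row (c \<cdot>\<^sub>m (M * A * transpose_mat M)))"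
  then have u: "u \<in> carrier_vec n" using M by simp
  define w where "w = transpose_mat M *\<^sub>v u"
  have w: "w \<in> carrier_vec m" using M u by (simp add: w_def)
  have MAM: "M * A * transpose_mat M \<in> carrier_mat n n" using A M by simp
  have "(c \<cdot>\<^sub>m (M * A * transpose_mat M)) *\<^sub>v u = c \<cdot>\<^sub>v ((M * A * transpose_mat M) *\<^sub>v u)"
    using MAM u by (intro eq_vecI) (auto simp: row_smult)
  also have "(M * A * transpose_mat M) *\<^sub>v u = (M * A) *\<^sub>v w"
    unfolding w_def using A M u by (intro assoc_mult_mat_vec) auto
  also have "\<dots> = M *\<^sub>v (A *\<^sub>v w)"
    using A M w by (intro assoc_mult_mat_vec) auto
  finally have "u \<bullet> ((c \<cdot>\<^sub>m (M * A * transpose_mat M)) *\<^sub>v u) = c * (w \<bullet> (A *\<^sub>v w))"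
    using A M u w transpose_vec_mult_scalar[OF M, of "A *\<^sub>v w" u] by (simp add: w_def)
  then show "0 \<le> u \<bullet> ((c \<cdot>\<^sub>m (M * A * transpose_mat M)) *\<^sub>v u)"
    using psd A w c unfolding psd_real_def by simp
qed

lemma sum_lessThan_3_blocks:
  fixes f :: "nat \<Rightarrow> 'a :: comm_monoid_add"
  shows "(\<Sum>i<3 * N. f i) = (\<Sum>m<N. \<Sum>k<3. f (3 * m + k))"
proof -
  have "(\<Sum>i<3 * N. f i) = (\<Sum>m<N. sum f {m * 3..<m * 3 + 3})"
    using sum.nat_group[of f 3 N] by (simp add: mult.commute)
  also have "\<dots> = (\<Sum>m<N. \<Sum>k<3. f (3 * m + k))"
    by (simp add: sum.atLeastLessThan_shift_0 atLeast0LessThan mult.commute)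
  finally show ?thesis .
qed

lemma bdiag3_carrier: "bdiag3 N Y \<in> carrier_mat (3 * N) (3 * N)"
  unfolding bdiag3_def by simp

lemma psd_real_bdiag3:
  assumes Y: "\<And>n. 1 \<le> n \<Longrightarrow> n \<le> N \<Longrightarrow> Y n \<in> carrier_mat 3 3"
    and psd: "\<And>n. 1 \<le> n \<Longrightarrow> n \<le> N \<Longrightarrow> psd_real (Y n)"
  shows "psd_real (bdiag3 N Y)"
proof -
  have entry: "bdiag3 N Y $$ (3 * m + k, 3 * m' + k') = (if m' = m then Y (m + 1) $$ (k, k') else 0)"
    if "m < N" "m' < N" "k < 3" "k' < 3" for m m' k k'
    using that unfolding bdiag3_def by simp
  show ?thesis
    unfolding psd_real_iff_double_sum[OF bdiag3_carrier]
  proof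
    fix x :: "nat \<Rightarrow> real"
    have "(\<Sum>i<3 * N. \<Sum>j<3 * N. x i * bdiag3 N Y $$ (i,j) * x j)
        = (\<Sum>m<N. \<Sum>k<3. \<Sum>m'<N. \<Sum>k'<3.
             x (3 * m + k) * bdiag3 N Y $$ (3 * m + k, 3 * m' + k') * x (3 * m' + k'))"
      by (simp add: sum_lessThan_3_blocks)
    also have "\<dots> = (\<Sum>m<N. \<Sum>k<3. \<Sum>k'<3. x (3 * m + k) * Y (m + 1) $$ (k, k') * x (3 * m + k'))"
    proof (rule sum.cong[OF refl], rule sum.cong[OF refl])
      fix m k :: nat assume m: "m \<in> {..<N}" and k: "k \<in> {..<3}"
      have block: "x (3 * m + k) * bdiag3 N Y $$ (3 * m + k, 3 * m' + k') * x (3 * m' + k')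
          = (if m' = m then x (3 * m + k) * Y (m + 1) $$ (k, k') * x (3 * m + k') else 0)"
        if "m' < N" "k' < 3" for m' k'
        using m k that by (simp add: entry)
      have "(\<Sum>m'<N. \<Sum>k'<3. x (3 * m + k) * bdiag3 N Y $$ (3 * m + k, 3 * m' + k') * x (3 * m' + k'))
          = (\<Sum>m'<N. \<Sum>k'<3. if m' = m then x (3 * m + k) * Y (m + 1) $$ (k, k') * x (3 * m + k') else 0)"
        by (intro sum.cong refl) (simp add: block)
      also have "\<dots> = (\<Sum>k'<3. \<Sum>m'<N. if m' = m then x (3 * m + k) * Y (m + 1) $$ (k, k') * x (3 * m + k') else 0)"
        by (rule sum.swap)
      also have "\<dots> = (\<Sum>k'<3. x (3 * m + k) * Y (m + 1) $$ (k, k') * x (3 * m + k'))"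
        using m by simp
      finally show "(\<Sum>m'<N. \<Sum>k'<3. x (3 * m + k) * bdiag3 N Y $$ (3 * m + k, 3 * m' + k') * x (3 * m' + k'))
          = (\<Sum>k'<3. x (3 * m + k) * Y (m + 1) $$ (k, k') * x (3 * m + k'))" .
    qed
    also have "\<dots> \<ge> 0"
    proof (rule sum_nonneg)
      fix m assume "m \<in> {..<N}"
      then have "\<forall>y. 0 \<le> (\<Sum>k<3. \<Sum>k'<3. y k * Y (m + 1) $$ (k, k') * y k')"
        using psd Y psd_real_iff_double_sum[of "Y (m + 1)" 3] by auto
      from this[rule_format, of "\<lambda>k. x (3 * m + k)"]
      show "0 \<le> (\<Sum>k<3. \<Sum>k'<3. x (3 * m + k) * Y (m + 1) $$ (k, k') * x (3 * m + k'))" .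
    qed
    finally show "0 \<le> (\<Sum>i<3 * N. \<Sum>j<3 * N. x i * bdiag3 N Y $$ (i,j) * x j)" .
  qed
qed

lemma diag_vec_mult_mult_diag_vec_index:
  assumes "Z \<in> carrier_mat n n" "k < n" "l < n" "dim_vec v = n" "dim_vec w = n"
  shows "(diag_vec v * Z * diag_vec w) $$ (k,l) = v $ k * Z $$ (k,l) * w $ l"
proof -
  have left: "(diag_vec v * Z) $$ (k,j) = v $ k * Z $$ (k,j)" if "j < n" for j
    using assms that unfolding diag_vec_def
    by (simp add: scalar_prod_def sum.delta if_distrib[of "\<lambda>a. a * _"] cong: if_cong)
  have "(diag_vec v * Z * diag_vec w) $$ (k,l) = (diag_vec v * Z) $$ (k,l) * w $ l"
    using assms unfolding diag_vec_def
    by (simp add: scalar_prod_def sum.delta' atLeast0LessThan if_distrib[of "\<lambda>a. _ * a"] cong: if_cong)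
  then show ?thesis
    using left assms by simp
qed

lemma Ztilde_carrier: "Z \<in> carrier_mat 3 3 \<Longrightarrow> Ztilde Z \<in> carrier_mat 3 3"
  unfolding Ztilde_def diag_vec_def alpha_vec_def carrier_mat_def by simp

lemma Ztilde_index:
  assumes "Z \<in> carrier_mat 3 3" "k < 3" "l < 3"
  shows "Ztilde Z $$ (k,l) = cnj (alpha ^ k) * alpha ^ l * Z $$ (k,l)"
  using diag_vec_mult_mult_diag_vec_index[OF assms, of "map_vec cnj alpha_vec" alpha_vec] assms
  unfolding Ztilde_def by (simp add: alpha_vec_def ac_simps)

lemma Re_cnj_alpha_pow_mult:
  assumes "k < 3" "l < 3"
  shows "Re (cnj (alpha ^ k) * alpha ^ l) = (if k = l then 1 else - 1 / 2)"
proof -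
  have "Re (cnj (alpha ^ k) * alpha ^ l) = cos (2 * pi / 3 * (real k - real l))"
    by (simp add: alpha_def DeMoivre cis_cnj cis_mult algebra_simps diff_divide_distrib)
  moreover have "cos (2 * (2 * pi / 3)) = - 1 / 2"
    by (simp only: cos_double_cos cos_120) (simp add: power2_eq_square)
  ultimately show ?thesis
    using assms by (auto simp: less_Suc_eq numeral_3_eq_3 cos_120)
qed

lemma psd_real_Im_Ztilde:
  assumes Z: "Z \<in> carrier_mat 3 3" and sym: "transpose_mat Z = Z"
    and dominant: "strictly_diag_dominant (map_mat Im Z)"
    and pos: "\<And>k. k < 3 \<Longrightarrow> Im (Z $$ (k,k)) > 0"
  shows "psd_real (map_mat Im (Ztilde Z))"
proof -
  define c where "c k l = cnj (alpha ^ k) * alpha ^ l" for k l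
  define H where "H k l = Re (c k l) * Im (Z $$ (k,l))" for k l
  define S where "S k l = Im (c k l) * Re (Z $$ (k,l))" for k l
  have Z_swap: "Z $$ (l,k) = Z $$ (k,l)" if "k < 3" "l < 3" for k l
    using sym Z that by (metis carrier_matD index_transpose_mat(1))
  have Re_c: "Re (c k l) = (if k = l then 1 else - 1 / 2)" if "k < 3" "l < 3" for k l
    using Re_cnj_alpha_pow_mult[OF that] by (simp add: c_def)
  have Y: "map_mat Im (Ztilde Z) \<in> carrier_mat 3 3"
    using Ztilde_carrier[OF Z] by simp
  have Y_index: "map_mat Im (Ztilde Z) $$ (k,l) = H k l + S k l" if "k < 3" "l < 3" for k l
  proof -
    have "Ztilde Z $$ (k,l) = c k l * Z $$ (k,l)"
      using Ztilde_index[OF Z that] by (simp add: c_def)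
    then show ?thesis
      using that Ztilde_carrier[OF Z] by (simp add: H_def S_def)
  qed
  have "0 \<le> (\<Sum>k<3. \<Sum>l<3. x k * H k l * x l)" for x
  proof (rule diag_dominant_double_sum_nonneg)
    fix k l :: nat assume "k < 3" "l < 3"
    then show "H l k = H k l"
      by (simp add: H_def Re_c Z_swap)
  next
    fix k :: nat assume k: "k < 3"
    have "(\<Sum>l\<in>{0..<3} - {k}. \<bar>H k l\<bar>) = (\<Sum>l\<in>{0..<3} - {k}. \<bar>map_mat Im Z $$ (k,l)\<bar>) / 2"
      unfolding sum_divide_distrib using k Z by (intro sum.cong refl) (auto simp: H_def Re_c)
    also have "\<dots> \<le> \<bar>map_mat Im Z $$ (k,k)\<bar>"
      using dominant k Z unfolding strictly_diag_dominant_def by fastforce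
    also have "\<dots> = H k k"
      using k Z pos[OF k] by (simp add: H_def Re_c)
    finally show "(\<Sum>l\<in>{0..<3} - {k}. \<bar>H k l\<bar>) \<le> H k k" .
  qed
  moreover have "(\<Sum>k<3. \<Sum>l<3. x k * S k l * x l) = 0" for x
  proof (rule double_sum_antisymmetric_eq_0)
    fix k l :: nat assume "k < 3" "l < 3"
    moreover have "c l k = cnj (c k l)"
      by (simp add: c_def mult.commute)
    ultimately show "S l k = - S k l"
      by (simp add: S_def Z_swap)
  qed
  moreover have "(\<Sum>k<3. \<Sum>l<3. x k * map_mat Im (Ztilde Z) $$ (k,l) * x l)
      = (\<Sum>k<3. \<Sum>l<3. x k * H k l * x l) + (\<Sum>k<3. \<Sum>l<3. x k * S k l * x l)" for x
  proof -
    have "(\<Sum>k<3. \<Sum>l<3. x k * map_mat Im (Ztilde Z) $$ (k,l) * x l)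
        = (\<Sum>k<3. \<Sum>l<3. x k * H k l * x l + x k * S k l * x l)"
      by (intro sum.cong refl) (simp add: Y_index algebra_simps)
    then show ?thesis
      by (simp add: sum.distrib)
  qed
  ultimately show ?thesis
    unfolding psd_real_iff_double_sum[OF Y] by simp
qed

lemma Mmat_carrier: "Mmat N par \<in> carrier_mat (3 * N) (3 * N)"
  unfolding Mmat_def Tmat_def carrier_mat_def by simp

theorem corollary1:
  fixes N :: nat and par :: "nat \<Rightarrow> nat" and Z :: "nat \<Rightarrow> complex mat"
  assumes parent: "\<And>n. 1 \<le> n \<Longrightarrow> n \<le> N \<Longrightarrow> par n < n"
    and Z_dim: "\<And>n. 1 \<le> n \<Longrightarrow> n \<le> N \<Longrightarrow> Z n \<in> carrier_mat 3 3"
    and Z_sym: "\<And>n. 1 \<le> n \<Longrightarrow> n \<le> N \<Longrightarrow> transpose_mat (Z n) = Z n"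
    and dd: "\<And>n. 1 \<le> n \<Longrightarrow> n \<le> N \<Longrightarrow> strictly_diag_dominant (map_mat Im (Z n))"
    and pos: "\<And>n k. 1 \<le> n \<Longrightarrow> n \<le> N \<Longrightarrow> k < 3 \<Longrightarrow> Im (Z n $$ (k,k)) > 0"
  shows "psd_real (Xmat N par Z)"
proof -
  let ?Y = "\<lambda>n. map_mat Im (Ztilde (Z n))"
  have "psd_real (bdiag3 N ?Y)"
  proof (rule psd_real_bdiag3)
    fix n assume "1 \<le> n" "n \<le> N"
    then show "?Y n \<in> carrier_mat 3 3" "psd_real (?Y n)"
      using Ztilde_carrier[OF Z_dim] psd_real_Im_Ztilde[OF Z_dim Z_sym dd pos] by auto
  qed
  then show ?thesis
    unfolding Xmat_def using bdiag3_carrier Mmat_carrier by (intro psd_real_congruence) auto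
qed

end
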